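(* Let $G$ be a finite simple graph without isolated vertices with $\gamma_t(G)=2$. Then $TDV(v)\le \deg(v)$ for every $v\in V(G)$.
   Context: A set $D \subseteq V(G)$ is a total dominating set of $G$ if every vertex of $G$ has a neighbor in $D$. $\gamma_t(G)$ is the minimum cardinality of a total dominating set; a minimum one is a $\gamma_t(G)$-set. $TDV(v)$ is the number of $\gamma_t(G)$-sets containing $v$. *)

theory Defs
  imports Main
begin

definition simple_graph :: "'a set \<Rightarrow> ('a \<Rightarrow> 'a \<Rightarrow> bool) \<Rightarrow> bool" where
  "simple_graph V E \<longleftrightarrow> finite V \<and> (\<forall>u v. E u v \<longrightarrow> u \<in> V \<and> v \<in> V)
     \<and> (\<forall>u v. E u v \<longrightarrow> E v u) \<and> (\<forall>v. \<not> E v v)"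

definition neighbors :: "'a set \<Rightarrow> ('a \<Rightarrow> 'a \<Rightarrow> bool) \<Rightarrow> 'a \<Rightarrow> 'a set" where
  "neighbors V E v = {u \<in> V. E v u}"

definition degree :: "'a set \<Rightarrow> ('a \<Rightarrow> 'a \<Rightarrow> bool) \<Rightarrow> 'a \<Rightarrow> nat" where
  "degree V E v = card (neighbors V E v)"

definition no_isolated :: "'a set \<Rightarrow> ('a \<Rightarrow> 'a \<Rightarrow> bool) \<Rightarrow> bool" where
  "no_isolated V E \<longleftrightarrow> (\<forall>v\<in>V. \<exists>u\<in>V. E v u)"

definition total_dominating :: "'a set \<Rightarrow> ('a \<Rightarrow> 'a \<Rightarrow> bool) \<Rightarrow> 'a set \<Rightarrow> bool" where
  "total_dominating V E D \<longleftrightarrow> D \<subseteq> V \<and> (\<forall>v\<in>V. \<exists>u\<in>D. E v u)"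

definition gamma_t :: "'a set \<Rightarrow> ('a \<Rightarrow> 'a \<Rightarrow> bool) \<Rightarrow> nat" where
  "gamma_t V E = Min {card D | D. total_dominating V E D}"

definition gamma_t_sets :: "'a set \<Rightarrow> ('a \<Rightarrow> 'a \<Rightarrow> bool) \<Rightarrow> 'a set set" where
  "gamma_t_sets V E = {D. total_dominating V E D \<and> card D = gamma_t V E}"

definition TDV :: "'a set \<Rightarrow> ('a \<Rightarrow> 'a \<Rightarrow> bool) \<Rightarrow> 'a \<Rightarrow> nat" where
  "TDV V E v = card {D \<in> gamma_t_sets V E. v \<in> D}"

end

theory Submission
  imports Defs
begin

text \<open>When \<open>\<gamma>\<^sub>t(G) = 2\<close>, the vertex \<open>v\<close> of a \<open>\<gamma>\<^sub>t(G)\<close>-set \<open>D\<close> must itself be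
  dominated by the other element of \<open>D\<close>, so \<open>D = {v, u}\<close> for a neighbour \<open>u\<close> of \<open>v\<close>.
  Hence \<open>u \<mapsto> {v, u}\<close> maps the neighbourhood of \<open>v\<close> onto all \<open>\<gamma>\<^sub>t(G)\<close>-sets containing \<open>v\<close>.\<close>

lemma finite_neighbors:
  assumes "simple_graph V E"
  shows "finite (neighbors V E v)"
  using assms unfolding simple_graph_def neighbors_def by auto

lemma total_dominating_card_2_containing:
  assumes "simple_graph V E" and "total_dominating V E D" and "card D = 2" and "v \<in> D"
  obtains u where "u \<in> neighbors V E v" and "D = {v, u}"
proof -
  obtain u where u: "u \<in> D" "E v u"
    using assms(2,4) unfolding total_dominating_def by blast
  have "u \<noteq> v"
    using u(2) assms(1) unfolding simple_graph_def by auto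
  with assms(3,4) u(1) have "D = {v, u}"
    by (auto simp: card_2_iff)
  moreover have "u \<in> neighbors V E v"
    using u assms(2) unfolding neighbors_def total_dominating_def by auto
  ultimately show ?thesis
    using that by blast
qed

lemma gamma_t_sets_containing_subset:
  assumes "simple_graph V E" and "gamma_t V E = 2"
  shows "{D \<in> gamma_t_sets V E. v \<in> D} \<subseteq> (\<lambda>u. {v, u}) ` neighbors V E v"
proof
  fix D assume "D \<in> {D \<in> gamma_t_sets V E. v \<in> D}"
  then have "total_dominating V E D" "card D = 2" "v \<in> D"
    using assms(2) unfolding gamma_t_sets_def by auto
  with assms(1) show "D \<in> (\<lambda>u. {v, u}) ` neighbors V E v"
    by (elim total_dominating_card_2_containing) auto
qed

theorem lemma2p12:
  fixes V :: "'a set" and E :: "'a \<Rightarrow> 'a \<Rightarrow> bool"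
  assumes "simple_graph V E"
    and "no_isolated V E"
    and "gamma_t V E = 2"
    and "v \<in> V"
  shows "TDV V E v \<le> degree V E v"
proof -
  have fin: "finite (neighbors V E v)"
    using assms(1) by (rule finite_neighbors)
  have "TDV V E v \<le> card ((\<lambda>u. {v, u}) ` neighbors V E v)"
    unfolding TDV_def
    using gamma_t_sets_containing_subset[OF assms(1,3)] fin by (intro card_mono) auto
  also have "\<dots> \<le> degree V E v"
    unfolding degree_def using fin by (rule card_image_le)
  finally show ?thesis .
qed

end
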